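(* Let $\hat S = \{{\cal S}_{1}, \ldots, {\cal S}_{k}\}$ ($k \ge 1$) be a finite set of services and let $q_1, \ldots, q_m$ be real-valued QoS parameters, each either positively monotonic (higher is better) or negatively monotonic (lower is better). For each parameter $q_t$ let $Max_t, Min_t$ be the maximum and minimum of $q_t({\cal S}_j)$ over $\hat S$, and define $NV_t({\cal S}_j) = 1$ if $Max_t = Min_t$, otherwise $NV_t({\cal S}_j) = \frac{q_t({\cal S}_j) - Min_t}{Max_t - Min_t}$ for positively monotonic $q_t$ and $NV_t({\cal S}_j) = \frac{Max_t - q_t({\cal S}_j)}{Max_t - Min_t}$ for negatively monotonic $q_t$; let $Dev_t({\cal S}_j) = 1 - NV_t({\cal S}_j)$. Choose the representative ${\cal S}_l$ as a service minimizing $\max_t Dev_t$; among tied services, choose one minimizing the second largest deviation, and so on (i.e. minimize lexicographically the vector of deviations sorted in non-increasing order), breaking any remaining ties arbitrarily. Then the QoS vector $(q_1({\cal S}_l), \ldots, q_m({\cal S}_l))$ lies on the Pareto-optimal front of $\{(q_1({\cal S}_j), \ldots, q_m({\cal S}_j)) : 1 \le j \le k\}$: there is no ${\cal S}_j \in \hat S$ that is at least as good as ${\cal S}_l$ in every parameter and strictly better in at least one parameter.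
   Context: In the first-level abstraction of web services, each class of services with identical input and output sets is replaced by one abstract service, which is assigned the QoS values of the "best representative" service of the class selected as described in the claim. "At least as good" means $\ge$ for positively monotonic parameters and $\le$ for negatively monotonic parameters. *)

theory Defs
  imports Complex_Main
begin

text \<open>QoS parameters indexed by t < m,
  q t s is the value of parameter t at service s; pos t says q t is positively monotonic
  (otherwise negatively monotonic).\<close>

definition MaxQ :: "(nat \<Rightarrow> 'a \<Rightarrow> real) \<Rightarrow> 'a set \<Rightarrow> nat \<Rightarrow> real" where
  "MaxQ q S t = Max (q t ` S)"

definition MinQ :: "(nat \<Rightarrow> 'a \<Rightarrow> real) \<Rightarrow> 'a set \<Rightarrow> nat \<Rightarrow> real" where
  "MinQ q S t = Min (q t ` S)"

definition NV :: "(nat \<Rightarrow> 'a \<Rightarrow> real) \<Rightarrow> (nat \<Rightarrow> bool) \<Rightarrow> 'a set \<Rightarrow> nat \<Rightarrow> 'a \<Rightarrow> real" where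
  "NV q pos S t s =
     (if MaxQ q S t = MinQ q S t then 1
      else if pos t then (q t s - MinQ q S t) / (MaxQ q S t - MinQ q S t)
      else (MaxQ q S t - q t s) / (MaxQ q S t - MinQ q S t))"

definition Dev :: "(nat \<Rightarrow> 'a \<Rightarrow> real) \<Rightarrow> (nat \<Rightarrow> bool) \<Rightarrow> 'a set \<Rightarrow> nat \<Rightarrow> 'a \<Rightarrow> real" where
  "Dev q pos S t s = 1 - NV q pos S t s"

definition dev_sorted :: "nat \<Rightarrow> (nat \<Rightarrow> 'a \<Rightarrow> real) \<Rightarrow> (nat \<Rightarrow> bool) \<Rightarrow> 'a set \<Rightarrow> 'a \<Rightarrow> real list" where
  "dev_sorted m q pos S s = rev (sort (map (\<lambda>t. Dev q pos S t s) [0..<m]))"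

definition is_representative :: "nat \<Rightarrow> (nat \<Rightarrow> 'a \<Rightarrow> real) \<Rightarrow> (nat \<Rightarrow> bool) \<Rightarrow> 'a set \<Rightarrow> 'a \<Rightarrow> bool" where
  "is_representative m q pos S l \<longleftrightarrow>
     l \<in> S \<and> (\<forall>j\<in>S. \<not> ord_class.lexordp (dev_sorted m q pos S j) (dev_sorted m q pos S l))"

definition at_least_as_good :: "(nat \<Rightarrow> bool) \<Rightarrow> (nat \<Rightarrow> 'a \<Rightarrow> real) \<Rightarrow> nat \<Rightarrow> 'a \<Rightarrow> 'a \<Rightarrow> bool" where
  "at_least_as_good pos q t j l \<longleftrightarrow> (if pos t then q t j \<ge> q t l else q t j \<le> q t l)"

definition strictly_better :: "(nat \<Rightarrow> bool) \<Rightarrow> (nat \<Rightarrow> 'a \<Rightarrow> real) \<Rightarrow> nat \<Rightarrow> 'a \<Rightarrow> 'a \<Rightarrow> bool" where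
  "strictly_better pos q t j l \<longleftrightarrow> (if pos t then q t j > q t l else q t j < q t l)"

definition dominates :: "nat \<Rightarrow> (nat \<Rightarrow> bool) \<Rightarrow> (nat \<Rightarrow> 'a \<Rightarrow> real) \<Rightarrow> 'a \<Rightarrow> 'a \<Rightarrow> bool" where
  "dominates m pos q j l \<longleftrightarrow>
     (\<forall>t<m. at_least_as_good pos q t j l) \<and> (\<exists>t<m. strictly_better pos q t j l)"

end

theory Submission
  imports Defs "HOL-Library.Multiset"
begin

text \<open>If service j dominates l, every deviation of j is at most the corresponding deviation of l
  and at least one is strictly smaller. Componentwise comparison survives sorting, and the strict
  inequality survives too because sorting preserves the total deviation. Hence the sorted
  deviation vector of j is lexicographically smaller than that of l, contradicting the choice of l.\<close>

lemma insort_list_all2_mono: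
  fixes xs ys :: "'a::linorder list"
  assumes "list_all2 (\<le>) xs ys" "sorted xs" "sorted ys" "x \<le> y"
  shows "list_all2 (\<le>) (insort x xs) (insort y ys)"
  using assms
proof (induction xs arbitrary: x y ys)
  case Nil
  then show ?case by simp
next
  case (Cons a xs)
  from Cons.prems(1) obtain b ys' where ys: "ys = b # ys'" and "a \<le> b"
    and tails: "list_all2 (\<le>) xs ys'" by (auto simp: list_all2_Cons1)
  have IH: "list_all2 (\<le>) (insort u xs) (insort v ys')" if "u \<le> v" for u v
    using Cons.IH[OF tails] Cons.prems(2,3) ys that by simp
  have "insort a xs = a # xs" "insort b ys' = b # ys'"
    using Cons.prems(2,3) ys by (cases xs; cases ys'; auto)+
  then show ?case
    using IH[of a y] IH[of x b] IH[of x y] \<open>a \<le> b\<close> Cons.prems(1,4) ys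
    by auto
qed

lemma sort_list_all2_mono:
  fixes xs ys :: "'a::linorder list"
  assumes "list_all2 (\<le>) xs ys"
  shows "list_all2 (\<le>) (sort xs) (sort ys)"
  using assms by (induction rule: list_all2_induct) (simp_all add: insort_list_all2_mono)

lemma lexordp_of_list_all2_le:
  fixes xs ys :: "'a::linorder list"
  assumes "list_all2 (\<le>) xs ys" "xs \<noteq> ys"
  shows "ord_class.lexordp xs ys"
  using assms
proof (induction rule: list_all2_induct)
  case Nil
  then show ?case by simp
next
  case (Cons x xs y ys)
  show ?case
  proof (cases "x < y")
    case True
    then show ?thesis by (rule lexordp.Cons)
  next
    case False
    with Cons have "x = y" "xs \<noteq> ys" by auto
    with Cons.IH show ?thesis by (simp add: lexordp.Cons_eq)
  qed
qed

lemma lexordp_rev_sort_of_list_all2_le: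
  fixes xs ys :: "'a::linorder list"
  assumes "list_all2 (\<le>) xs ys" "mset xs \<noteq> mset ys"
  shows "ord_class.lexordp (rev (sort xs)) (rev (sort ys))"
proof (rule lexordp_of_list_all2_le)
  show "list_all2 (\<le>) (rev (sort xs)) (rev (sort ys))"
    using sort_list_all2_mono[OF assms(1)] by simp
  show "rev (sort xs) \<noteq> rev (sort ys)"
    using assms(2) by (metis mset_sort rev_rev_ident)
qed

lemma Dev_mono:
  assumes "finite S" "j \<in> S" "at_least_as_good pos q t j l"
  shows "Dev q pos S t j \<le> Dev q pos S t l"
proof (cases "MaxQ q S t = MinQ q S t")
  case True
  then show ?thesis by (simp add: Dev_def NV_def)
next
  case False
  have "MinQ q S t \<le> q t j" "q t j \<le> MaxQ q S t"
    using assms(1,2) by (auto simp: MinQ_def MaxQ_def)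
  with False have "MaxQ q S t - MinQ q S t > 0" by linarith
  with False assms(3) show ?thesis
    by (auto simp: Dev_def NV_def at_least_as_good_def divide_right_mono)
qed

lemma Dev_strict_mono:
  assumes "finite S" "j \<in> S" "l \<in> S" "strictly_better pos q t j l"
  shows "Dev q pos S t j < Dev q pos S t l"
proof -
  have "MinQ q S t \<le> q t j" "q t l \<le> MaxQ q S t" "MinQ q S t \<le> q t l" "q t j \<le> MaxQ q S t"
    using assms(1-3) by (auto simp: MinQ_def MaxQ_def)
  moreover have "q t j \<noteq> q t l"
    using assms(4) by (auto simp: strictly_better_def split: if_splits)
  ultimately have "MaxQ q S t - MinQ q S t > 0"
    by linarith
  with assms(4) show ?thesis
    by (auto simp: Dev_def NV_def strictly_better_def divide_strict_right_mono)
qed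

lemma dominates_lexordp_dev_sorted:
  assumes "finite S" "j \<in> S" "l \<in> S" "dominates m pos q j l"
  shows "ord_class.lexordp (dev_sorted m q pos S j) (dev_sorted m q pos S l)"
proof -
  let ?dev = "\<lambda>s t. Dev q pos S t s"
  have le: "\<forall>t\<in>{0..<m}. ?dev j t \<le> ?dev l t"
    using assms(4) Dev_mono[OF assms(1,2)] by (auto simp: dominates_def)
  have "\<exists>t\<in>{0..<m}. ?dev j t < ?dev l t"
    using assms(4) Dev_strict_mono[OF assms(1-3)] unfolding dominates_def by fastforce
  with le have "sum (?dev j) {0..<m} < sum (?dev l) {0..<m}"
    by (simp add: sum_strict_mono_ex1)
  then have "mset (map (?dev j) [0..<m]) \<noteq> mset (map (?dev l) [0..<m])"
    by (metis sum_mset_sum_list interv_sum_list_conv_sum_set_nat set_upt less_irrefl)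
  moreover have "list_all2 (\<le>) (map (?dev j) [0..<m]) (map (?dev l) [0..<m])"
    using le by (simp add: list_all2_conv_all_nth)
  ultimately show ?thesis
    by (simp add: dev_sorted_def lexordp_rev_sort_of_list_all2_le)
qed

theorem lemma5:
  fixes S :: "'a set" and m :: nat and q :: "nat \<Rightarrow> 'a \<Rightarrow> real" and pos :: "nat \<Rightarrow> bool" and l :: 'a
  assumes "finite S" and "S \<noteq> {}"
    and "is_representative m q pos S l"
  shows "\<not> (\<exists>j\<in>S. dominates m pos q j l)"
  using assms(3) dominates_lexordp_dev_sorted[OF assms(1)]
  unfolding is_representative_def by blast

end
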